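(* Let $\widehat{\mathbf M}=(\hat{\mathbb X},\hat{\mathbb U},\mathbb Y,\hat x_0,\hat{\mathbf t},\hat h)$ be a gMDP, $\psi$ an scLTL formula with DFA $\mathcal A_\psi=(Q,q_0,\Sigma,F,\tau)$, $\delta\ge0$, $\mu$ a stationary Markov policy on $\widehat{\mathbf M}\otimes\mathcal A_\psi$, and $\hat{\mathbf C}$ the control strategy for $\widehat{\mathbf M}$ corresponding to $\mu$, so that $\mathbb P_{\hat{\mathbf C}\times\widehat{\mathbf M}}(\boldsymbol\omega\models\psi)$ equals the probability that executions of the product under $\mu$ from its initial state reach $\hat{\mathbb X}\times F$. Then for any absorbing set $I$ for $\mu$, $$\mathcal S^\mu_\delta\ \ge\ \mathbb P_{\hat{\mathbf C}\times\widehat{\mathbf M}}(\boldsymbol\omega\models\psi)-\delta\,h\big(I\cup(\hat{\mathbb X}\times F)\big),$$ where $\mathcal S^\mu_\delta:=\max\{\mathbf 1_F(\bar q_0),V^\mu_\infty(\hat x_0,\bar q_0)\}$ with $\bar q_0=\tau(q_0,\mathsf L(\hat h(\hat x_0)))$, $V^\mu_\infty=\lim_{l\to\infty}(\mathbf T^\mu_\delta)^l(0)$, and $h(\cdot)$ denotes the mean hitting time from the initial state of the product.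
   Context: A gMDP $\widehat{\mathbf M}=(\hat{\mathbb X},\hat{\mathbb U},\mathbb Y,\hat x_0,\hat{\mathbf t},\hat h)$: Polish state/input spaces, metric output space $\mathbb Y$, initial state $\hat x_0$, kernel $\hat{\mathbf t}(\cdot\mid\hat x,\hat u)$, measurable output map $\hat h$; output trace $y_t=\hat h(\hat x_t)$. A control strategy is a gMDP reading the state and outputting a distribution over inputs; $\mathbb P_{\hat{\mathbf C}\times\widehat{\mathbf M}}$ is the induced measure on output traces. $\Sigma=2^{\mathsf{AP}}$, $\mathsf L:\mathbb Y\to\Sigma$ measurable labelling, word $\boldsymbol\omega=\mathsf L(y_0)\mathsf L(y_1)\cdots$; $\psi$ scLTL, $\mathcal A_\psi$ a DFA (accepting set $F$, transition $\tau$) accepting exactly the words satisfying $\psi$. Product $\widehat{\mathbf M}\otimes\mathcal A_\psi$: states $\hat{\mathbb X}\times Q$, inputs $\hat{\mathbb U}$, initial state $(\hat x_0,\bar q_0)$, kernel $\bar{\mathbf t}(d\hat x'\times\{q'\}\mid\hat x,q,u)=\mathbf 1_{\{q'\}}(\tau(q,\mathsf L(\hat h(\hat x'))))\hat{\mathbf t}(d\hat x'\mid\hat x,u)$. Stationary Markov policy: universally measurable $\mu:\hat{\mathbb X}\times Q\to\mathcal P(\hat{\mathbb U})$. $\mathbf T^\mu(V)(\hat x,q)=\int\max\{\mathbf 1_F(q'),V(\hat x',q')\}\bar{\mathbf t}(d\hat x'\times\{q'\}\mid\hat x,q,\mu(\hat x,q))$, $\mathbf T^\mu_\delta(V)=\mathbf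 L(\mathbf T^\mu(V)-\delta)$ with $\mathbf L(r)=\min(1,\max(0,r))$. An absorbing set for $\mu$ is $I\subseteq\hat{\mathbb X}\times(Q\setminus F)$ such that, under $\mu$, $\mathbb P[(\hat x_{t+1},q_{t+1})\in I\mid(\hat x_t,q_t)]=1$ whenever $(\hat x_t,q_t)\in I$. For $A\subseteq\hat{\mathbb X}\times Q$, $H_A=\inf\{t\in\mathbb N\cup\{\infty\}:(\hat x_t,q_t)\in A\}$ on executions under $\mu$, and the mean hitting time is $h(A)=\mathbb E[H_A]=\sum_{n\ge1}\mathbb P(H_A\ge n)$. *)

theory Defs
  imports "HOL-Probability.Probability"
begin

definition univ_meas_sets :: "'a measure \<Rightarrow> 'a set set" where
  "univ_meas_sets X =
     {A. \<forall>P. sets P = sets X \<and> prob_space P \<longrightarrow> A \<in> sets (completion P)}"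

definition univ_meas_space :: "'a measure \<Rightarrow> 'a measure" where
  "univ_meas_space X = sigma (space X) (univ_meas_sets X)"

definition prod_step ::
  "('x \<Rightarrow> 'u \<Rightarrow> 'x measure) \<Rightarrow> ('x \<Rightarrow> 'y) \<Rightarrow> ('y \<Rightarrow> 'ap set)
   \<Rightarrow> ('q \<Rightarrow> 'ap set \<Rightarrow> 'q) \<Rightarrow> ('x \<times> 'q \<Rightarrow> 'u measure)
   \<Rightarrow> ('x \<times> 'q \<Rightarrow> ennreal) \<Rightarrow> 'x \<times> 'q \<Rightarrow> ennreal" where
  "prod_step t h L \<tau> \<mu> f s =
     (\<integral>\<^sup>+ u. (\<integral>\<^sup>+ x'. f (x', \<tau> (snd s) (L (h x'))) \<partial>(t (fst s) u)) \<partial>(\<mu> s))"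

definition T_op ::
  "('x \<Rightarrow> 'u \<Rightarrow> 'x measure) \<Rightarrow> ('x \<Rightarrow> 'y) \<Rightarrow> ('y \<Rightarrow> 'ap set)
   \<Rightarrow> ('q \<Rightarrow> 'ap set \<Rightarrow> 'q) \<Rightarrow> 'q set \<Rightarrow> ('x \<times> 'q \<Rightarrow> 'u measure)
   \<Rightarrow> ('x \<times> 'q \<Rightarrow> real) \<Rightarrow> 'x \<times> 'q \<Rightarrow> real" where
  "T_op t h L \<tau> F \<mu> V s =
     enn2real (prod_step t h L \<tau> \<mu>
        (\<lambda>s'. ennreal (max (indicator F (snd s')) (V s'))) s)"

definition clamp01 :: "real \<Rightarrow> real" where
  "clamp01 r = min 1 (max 0 r)"

definition T_delta ::
  "('x \<Rightarrow> 'u \<Rightarrow> 'x measure) \<Rightarrow> ('x \<Rightarrow> 'y) \<Rightarrow> ('y \<Rightarrow> 'ap set)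
   \<Rightarrow> ('q \<Rightarrow> 'ap set \<Rightarrow> 'q) \<Rightarrow> 'q set \<Rightarrow> ('x \<times> 'q \<Rightarrow> 'u measure) \<Rightarrow> real
   \<Rightarrow> ('x \<times> 'q \<Rightarrow> real) \<Rightarrow> 'x \<times> 'q \<Rightarrow> real" where
  "T_delta t h L \<tau> F \<mu> \<delta> V s = clamp01 (T_op t h L \<tau> F \<mu> V s - \<delta>)"

definition V_inf ::
  "('x \<Rightarrow> 'u \<Rightarrow> 'x measure) \<Rightarrow> ('x \<Rightarrow> 'y) \<Rightarrow> ('y \<Rightarrow> 'ap set)
   \<Rightarrow> ('q \<Rightarrow> 'ap set \<Rightarrow> 'q) \<Rightarrow> 'q set \<Rightarrow> ('x \<times> 'q \<Rightarrow> 'u measure) \<Rightarrow> real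
   \<Rightarrow> 'x \<times> 'q \<Rightarrow> real" where
  "V_inf t h L \<tau> F \<mu> \<delta> s = lim (\<lambda>l. ((T_delta t h L \<tau> F \<mu> \<delta>) ^^ l) (\<lambda>_. 0) s)"

(* avoid A n s = P_s(H_A >= n) = P_s(state_k \<notin> A for all k < n) for the product
   chain under mu started in s. *)
fun avoid ::
  "('x \<Rightarrow> 'u \<Rightarrow> 'x measure) \<Rightarrow> ('x \<Rightarrow> 'y) \<Rightarrow> ('y \<Rightarrow> 'ap set)
   \<Rightarrow> ('q \<Rightarrow> 'ap set \<Rightarrow> 'q) \<Rightarrow> ('x \<times> 'q \<Rightarrow> 'u measure)
   \<Rightarrow> ('x \<times> 'q) set \<Rightarrow> nat \<Rightarrow> 'x \<times> 'q \<Rightarrow> ennreal" where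
  "avoid t h L \<tau> \<mu> A 0 s = 1"
| "avoid t h L \<tau> \<mu> A (Suc n) s =
     indicator (- A) s * prod_step t h L \<tau> \<mu> (avoid t h L \<tau> \<mu> A n) s"

(* probability of ever reaching A: P_s(H_A < infinity) = 1 - lim_n P_s(H_A >= n) *)
definition reach_prob ::
  "('x \<Rightarrow> 'u \<Rightarrow> 'x measure) \<Rightarrow> ('x \<Rightarrow> 'y) \<Rightarrow> ('y \<Rightarrow> 'ap set)
   \<Rightarrow> ('q \<Rightarrow> 'ap set \<Rightarrow> 'q) \<Rightarrow> ('x \<times> 'q \<Rightarrow> 'u measure)
   \<Rightarrow> ('x \<times> 'q) set \<Rightarrow> 'x \<times> 'q \<Rightarrow> ennreal" where
  "reach_prob t h L \<tau> \<mu> A s = 1 - (INF n. avoid t h L \<tau> \<mu> A n s)"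

(* mean hitting time h(A) = E[H_A] = sum_{n>=1} P(H_A >= n) *)
definition mean_hit ::
  "('x \<Rightarrow> 'u \<Rightarrow> 'x measure) \<Rightarrow> ('x \<Rightarrow> 'y) \<Rightarrow> ('y \<Rightarrow> 'ap set)
   \<Rightarrow> ('q \<Rightarrow> 'ap set \<Rightarrow> 'q) \<Rightarrow> ('x \<times> 'q \<Rightarrow> 'u measure)
   \<Rightarrow> ('x \<times> 'q) set \<Rightarrow> 'x \<times> 'q \<Rightarrow> ennreal" where
  "mean_hit t h L \<tau> \<mu> A s = (\<Sum>n. avoid t h L \<tau> \<mu> A (Suc n) s)"

definition absorbing ::
  "('x \<Rightarrow> 'u \<Rightarrow> 'x measure) \<Rightarrow> ('x \<Rightarrow> 'y) \<Rightarrow> ('y \<Rightarrow> 'ap set)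
   \<Rightarrow> ('q \<Rightarrow> 'ap set \<Rightarrow> 'q) \<Rightarrow> 'q set \<Rightarrow> ('x \<times> 'q \<Rightarrow> 'u measure)
   \<Rightarrow> ('x \<times> 'q) set \<Rightarrow> bool" where
  "absorbing t h L \<tau> F \<mu> I \<longleftrightarrow>
     I \<subseteq> UNIV \<times> (- F) \<and>
     (\<forall>s\<in>I. prod_step t h L \<tau> \<mu> (indicator I) s = 1)"

end

theory Submission
  imports Defs
begin

text \<open>
  Let \<open>W\<^sub>l = (T\<^sup>\<mu>\<^sub>\<delta>)\<^sup>l 0\<close> and \<open>S\<^sub>l = max 1\<^sub>F W\<^sub>l\<close> (\<open>V_iter l\<close> and \<open>S_iter l\<close> below). Let \<open>Z\<close>
  (\<open>trap\<close>) be the set of product states from which \<open>X \<times> F\<close> is reached with probability 0,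
  and \<open>A = Z \<union> X \<times> F\<close>. By induction on \<open>l\<close>, from every state \<open>s\<close>
    \<open>1 \<le> S\<^sub>l s + \<delta> E\<^sub>s[min H\<^sub>A l] + P\<^sub>s(H\<^bsub>X \<times> F\<^esub> > l)\<close>:
  one step of \<open>T\<^sup>\<mu>\<^sub>\<delta>\<close> loses at most \<open>\<delta>\<close> against the exact reachability operator, and this
  loss only occurs outside \<open>A\<close>, where it is paid for by one unit of hitting time.
  Letting \<open>l \<rightarrow> \<infinity>\<close> and using \<open>W\<^sub>l \<le> V\<^sup>\<mu>\<^sub>\<infinity>\<close> bounds the reachability probability by
  \<open>S + \<delta> h(A)\<close>, and \<open>h(A) \<le> h(I \<union> X \<times> F)\<close> because every absorbing set lies in \<open>Z\<close>.

  The one-step operator must be additive on functions such as \<open>W\<^sub>l\<close>, which are only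
  universally measurable because the policy is. This rests on the fact that integrating a
  universally measurable function against a universally measurable kernel gives a
  universally measurable function.
\<close>

section \<open>Universally measurable functions\<close>

lemma space_univ_meas_space [simp]: "space (univ_meas_space M) = space M"
  unfolding univ_meas_space_def by (simp add: space_measure_of_conv)

lemma sets_subset_univ_meas_sets: "sets M \<subseteq> univ_meas_sets M"
  unfolding univ_meas_sets_def by auto

lemma univ_meas_sets_subset_Pow:
  assumes "space M \<noteq> {}"
  shows "univ_meas_sets M \<subseteq> Pow (space M)"
proof
  fix A assume A: "A \<in> univ_meas_sets M"
  from assms obtain x where "x \<in> space M" by blast
  then have "A \<in> sets (completion (return M x))"
    using A prob_space_return[of x M] unfolding univ_meas_sets_def by simp
  then have "A \<subseteq> space (completion (return M x))"
    by (rule sets.sets_into_space)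
  then show "A \<in> Pow (space M)"
    by simp
qed

lemma sets_univ_meas_space:
  assumes "space M \<noteq> {}"
  shows "sets (univ_meas_space M) = sigma_sets (space M) (univ_meas_sets M)"
  using univ_meas_sets_subset_Pow[OF assms]
  unfolding univ_meas_space_def by (simp add: sets_measure_of_conv)

lemma sets_subset_univ_meas_space: "sets M \<subseteq> sets (univ_meas_space M)"
proof (cases "space M = {}")
  case True
  then have "sets M \<subseteq> {{}}"
    using sets.sets_into_space by blast
  then show ?thesis
    using sets.empty_sets[of "univ_meas_space M"] by blast
next
  case False
  then show ?thesis
    using sets_subset_univ_meas_sets[of M] by (auto simp: sets_univ_meas_space)
qed

lemma sets_univ_meas_space_subset_completion:
  assumes P: "prob_space P" "sets P = sets M"
  shows "sets (univ_meas_space M) \<subseteq> sets (completion P)"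
proof -
  have space: "space P = space M"
    using sets_eq_imp_space_eq[OF P(2)] .
  then have "space M \<noteq> {}"
    using prob_space.not_empty[OF P(1)] by simp
  moreover have "univ_meas_sets M \<subseteq> sets (completion P)"
    using P unfolding univ_meas_sets_def by auto
  ultimately show ?thesis
    using sets.sigma_sets_subset[of "univ_meas_sets M" "completion P"] space
    by (simp add: sets_univ_meas_space)
qed

lemma measurable_univ_meas_space: "f \<in> M \<rightarrow>\<^sub>M N \<Longrightarrow> f \<in> univ_meas_space M \<rightarrow>\<^sub>M N"
  using measurable_mono[OF order_refl refl sets_subset_univ_meas_space] by auto

lemma univ_measurable_completion:
  assumes "f \<in> univ_meas_space M \<rightarrow>\<^sub>M N" "prob_space P" "sets P = sets M"
  shows "f \<in> completion P \<rightarrow>\<^sub>M N"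
proof -
  have "space (univ_meas_space M) = space (completion P)"
    using sets_eq_imp_space_eq[OF assms(3)] by simp
  then show ?thesis
    using measurable_mono[OF order_refl refl sets_univ_meas_space_subset_completion[OF assms(2,3)]]
      assms(1) by auto
qed

lemma univ_measurableI:
  assumes "\<And>P. prob_space P \<Longrightarrow> sets P = sets M \<Longrightarrow> f \<in> completion P \<rightarrow>\<^sub>M N"
  shows "f \<in> univ_meas_space M \<rightarrow>\<^sub>M N"
proof (cases "space M = {}")
  case True
  then show ?thesis
    by (intro measurableI) simp_all
next
  case False
  have return: "prob_space (return M x)" "sets (return M x) = sets M" if "x \<in> space M" for x
    using that by (auto intro: prob_space_return)
  show ?thesis
  proof (rule measurableI)
    show "f x \<in> space N" if "x \<in> space (univ_meas_space M)" for x
      using that measurable_space[OF assms[OF return]] by simp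
  next
    fix A assume A: "A \<in> sets N"
    have "f -` A \<inter> space M \<in> univ_meas_sets M"
      unfolding univ_meas_sets_def
    proof safe
      fix P assume P: "sets P = sets M" "prob_space P"
      then show "f -` A \<inter> space M \<in> sets (completion P)"
        using measurable_sets[OF assms[OF P(2,1)] A] sets_eq_imp_space_eq[OF P(1)] by simp
    qed
    then show "f -` A \<inter> space (univ_meas_space M) \<in> sets (univ_meas_space M)"
      using False by (simp add: sets_univ_meas_space)
  qed
qed

lemma univ_measurable_comp:
  assumes \<psi>: "\<psi> \<in> M \<rightarrow>\<^sub>M N" and f: "f \<in> univ_meas_space N \<rightarrow>\<^sub>M K"
  shows "(\<lambda>x. f (\<psi> x)) \<in> univ_meas_space M \<rightarrow>\<^sub>M K"
proof (rule univ_measurableI)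
  fix P assume P: "prob_space P" "sets P = sets M"
  define D where "D = distr P N \<psi>"
  have \<psi>P: "\<psi> \<in> P \<rightarrow>\<^sub>M N"
    using \<psi> by (simp add: measurable_cong_sets[OF P(2) refl])
  have D: "prob_space D" "sets D = sets N"
    unfolding D_def using prob_space.prob_space_distr[OF P(1) \<psi>P] by auto
  have \<psi>D: "\<psi> \<in> P \<rightarrow>\<^sub>M D"
    using \<psi>P by (simp add: measurable_cong_sets[OF refl D(2)])
  have "distr (completion P) D \<psi> = D"
    using distr_completion[OF \<psi>D] distr_cong[OF refl D(2), of P \<psi> \<psi>] unfolding D_def by simp
  then have "\<psi> \<in> completion P \<rightarrow>\<^sub>M completion D"
    by (intro completion.measurable_completion2 measurable_completion[OF \<psi>D]) simp
  then show "(\<lambda>x. f (\<psi> x)) \<in> completion P \<rightarrow>\<^sub>M K"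
    using univ_measurable_completion[OF f D] by (rule measurable_comp[unfolded comp_def])
qed

lemma (in complete_measure) measurable_AE_cong:
  assumes "g' \<in> borel_measurable M" and "AE x in M. g x = g' x"
  shows "g \<in> borel_measurable M"
proof (rule measurableI)
  fix A :: "'b set" assume A: "A \<in> sets borel"
  show "g -` A \<inter> space M \<in> sets M"
  proof (rule in_sets_AE)
    show "AE x in M. x \<in> g' -` A \<inter> space M \<longleftrightarrow> x \<in> g -` A \<inter> space M"
      using assms(2) by eventually_elim auto
  qed (use measurable_sets[OF assms(1) A] in auto)
qed simp

lemma nn_integral_add_univ_measurable:
  assumes "prob_space P" "sets P = sets M"
    and "f \<in> borel_measurable (univ_meas_space M)" "g \<in> borel_measurable (univ_meas_space M)"
  shows "(\<integral>\<^sup>+x. f x + g x \<partial>P) = (\<integral>\<^sup>+x. f x \<partial>P) + (\<integral>\<^sup>+x. g x \<partial>P)"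
  using nn_integral_add[OF univ_measurable_completion[OF assms(3,1,2)]
      univ_measurable_completion[OF assms(4,1,2)]]
  by (simp add: nn_integral_completion)

lemma nn_integral_cmult_univ_measurable:
  assumes "prob_space P" "sets P = sets M" "f \<in> borel_measurable (univ_meas_space M)"
  shows "(\<integral>\<^sup>+x. c * f x \<partial>P) = c * (\<integral>\<^sup>+x. f x \<partial>P)"
  using nn_integral_cmult[OF univ_measurable_completion[OF assms(3,1,2)]]
  by (simp add: nn_integral_completion)

lemma measurable_distr_Pair_prob_algebra:
  assumes "\<kappa> \<in> C \<rightarrow>\<^sub>M prob_algebra N" and [measurable]: "(\<lambda>x. x) \<in> C \<rightarrow>\<^sub>M M"
  shows "(\<lambda>x. distr (\<kappa> x) (M \<Otimes>\<^sub>M N) (Pair x)) \<in> C \<rightarrow>\<^sub>M prob_algebra (M \<Otimes>\<^sub>M N)"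
  by (rule measurable_distr_prob_space2[OF assms(1)]) measurable

lemma AE_sections_bind_distr_Pair:
  assumes C: "prob_space C" and \<kappa>: "\<kappa> \<in> C \<rightarrow>\<^sub>M prob_algebra N" and "(\<lambda>x. x) \<in> C \<rightarrow>\<^sub>M M"
    and AE: "AE w in C \<bind> (\<lambda>x. distr (\<kappa> x) (M \<Otimes>\<^sub>M N) (Pair x)). Q w"
  shows "AE x in C. AE y in \<kappa> x. Q (x, y)"
proof -
  define K where "K x = distr (\<kappa> x) (M \<Otimes>\<^sub>M N) (Pair x)" for x
  have K: "K \<in> C \<rightarrow>\<^sub>M prob_algebra (M \<Otimes>\<^sub>M N)"
    unfolding K_def using assms(2,3) by (rule measurable_distr_Pair_prob_algebra)
  have "C \<in> space (prob_algebra C)"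
    using C by (simp add: space_prob_algebra)
  note sets_J = sets_bind'[OF this K]
  from AE obtain Z where Z: "Z \<in> null_sets (C \<bind> K)" "{w \<in> space (C \<bind> K). \<not> Q w} \<subseteq> Z"
    unfolding eventually_ae_filter K_def by blast
  have Z_sets: "Z \<in> sets (M \<Otimes>\<^sub>M N)"
    using Z(1) sets_J by auto
  have "AE x in C. AE w in K x. w \<notin> Z"
    using AE_not_in[OF Z(1)]
    by (subst (asm) AE_bind[OF measurable_prob_algebraD[OF K]]) (use Z_sets in measurable)
  then show ?thesis
    using AE_space
  proof eventually_elim
    case (elim x)
    have x: "x \<in> space M"
      using measurable_space[OF assms(3) elim(2)] .
    have sets_\<kappa>: "sets (\<kappa> x) = sets N"
      using measurable_space[OF \<kappa> elim(2)] by (simp add: space_prob_algebra)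
    have Pair: "Pair x \<in> \<kappa> x \<rightarrow>\<^sub>M M \<Otimes>\<^sub>M N"
      using measurable_Pair1'[OF x] by (simp add: measurable_cong_sets[OF sets_\<kappa> refl])
    have "AE y in \<kappa> x. (x, y) \<notin> Z"
      using elim(1) unfolding K_def by (subst (asm) AE_distr_iff[OF Pair]) (use Z_sets in measurable)
    then show ?case
      using AE_space
    proof eventually_elim
      case (elim y)
      then have "(x, y) \<in> space (C \<bind> K)"
        using x sets_eq_imp_space_eq[OF sets_\<kappa>] sets_eq_imp_space_eq[OF sets_J]
        by (simp add: space_pair_measure)
      then show ?case
        using elim(1) Z(2) by blast
    qed
  qed
qed

text \<open>
  Combine the law \<open>p\<close> and \<open>\<kappa>\<close> into a joint law \<open>J\<close> on \<open>M \<Otimes>\<^sub>M N\<close> and replace \<open>f\<close> by a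
  measurable \<open>f'\<close> that agrees with it \<open>J\<close>-almost everywhere; then \<open>f(x, \<cdot>) = f'(x, \<cdot>)\<close>
  \<open>\<kappa> x\<close>-almost everywhere for almost every \<open>x\<close>.
\<close>

lemma nn_integral_univ_measurable_kernel:
  fixes f :: "'a \<times> 'b \<Rightarrow> ennreal"
  assumes \<kappa>: "\<kappa> \<in> univ_meas_space M \<rightarrow>\<^sub>M prob_algebra N"
    and f: "f \<in> borel_measurable (univ_meas_space (M \<Otimes>\<^sub>M N))"
  shows "(\<lambda>x. \<integral>\<^sup>+y. f (x, y) \<partial>\<kappa> x) \<in> borel_measurable (univ_meas_space M)"
proof (rule univ_measurableI)
  fix p assume p: "prob_space p" "sets p = sets M"
  define C where "C = completion p"
  have C: "prob_space C"
    unfolding C_def by (rule prob_spaceI) (simp add: prob_space.emeasure_space_1[OF p(1)])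
  have \<kappa>C: "\<kappa> \<in> C \<rightarrow>\<^sub>M prob_algebra N"
    unfolding C_def by (rule univ_measurable_completion[OF \<kappa> p])
  have [measurable]: "(\<lambda>x. x) \<in> C \<rightarrow>\<^sub>M M"
    unfolding C_def by (intro measurable_completion measurable_ident_sets p(2))
  define J where "J = C \<bind> (\<lambda>x. distr (\<kappa> x) (M \<Otimes>\<^sub>M N) (Pair x))"
  note K = measurable_distr_Pair_prob_algebra[OF \<kappa>C]
  have C_space: "C \<in> space (prob_algebra C)"
    using C by (simp add: space_prob_algebra)
  have J: "prob_space J" "sets J = sets (M \<Otimes>\<^sub>M N)"
    unfolding J_def using prob_space_bind'[OF C_space K] sets_bind'[OF C_space K] by auto
  obtain f' where f': "f' \<in> borel_measurable J" and "AE w in J. f w = f' w"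
    using completion_ex_borel_measurable[OF univ_measurable_completion[OF f J]] by blast
  then have "AE x in C. AE y in \<kappa> x. f (x, y) = f' (x, y)"
    unfolding J_def by (intro AE_sections_bind_distr_Pair[OF C \<kappa>C]) measurable
  then have "AE x in C. (\<integral>\<^sup>+y. f (x, y) \<partial>\<kappa> x) = (\<integral>\<^sup>+y. f' (x, y) \<partial>\<kappa> x)"
    by eventually_elim (rule nn_integral_cong_AE)
  moreover have "(\<lambda>x. \<integral>\<^sup>+y. f' (x, y) \<partial>\<kappa> x) \<in> borel_measurable C"
  proof (rule nn_integral_measurable_subprob_algebra2[OF _ measurable_prob_algebraD[OF \<kappa>C]])
    have [measurable]: "f' \<in> borel_measurable (M \<Otimes>\<^sub>M N)"
      using f' by (simp add: measurable_cong_sets[OF J(2) refl])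
    show "(\<lambda>(x, y). f' (x, y)) \<in> borel_measurable (C \<Otimes>\<^sub>M N)"
      by measurable
  qed
  ultimately show "(\<lambda>x. \<integral>\<^sup>+y. f (x, y) \<partial>\<kappa> x) \<in> borel_measurable (completion p)"
    unfolding C_def by (rule completion.measurable_AE_cong[rotated])
qed

section \<open>The product of the gMDP with the automaton under a policy\<close>

locale gmdp_product =
  fixes t :: "'x::polish_space \<Rightarrow> 'u::polish_space \<Rightarrow> 'x measure"
    and h :: "'x \<Rightarrow> 'y::metric_space"
    and L :: "'y \<Rightarrow> 'ap::finite set"
    and \<tau> :: "'q::finite \<Rightarrow> 'ap set \<Rightarrow> 'q"
    and \<mu> :: "'x \<times> 'q \<Rightarrow> 'u measure"
  assumes kernel: "(\<lambda>(x, u). t x u) \<in> borel \<Otimes>\<^sub>M borel \<rightarrow>\<^sub>M prob_algebra borel"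
    and h_meas: "h \<in> borel_measurable borel"
    and L_meas: "L \<in> borel \<rightarrow>\<^sub>M count_space UNIV"
    and policy: "\<mu> \<in> univ_meas_space (borel \<Otimes>\<^sub>M count_space UNIV) \<rightarrow>\<^sub>M prob_algebra borel"
begin

abbreviation states :: "('x \<times> 'q) measure" where
  "states \<equiv> borel \<Otimes>\<^sub>M count_space UNIV"

abbreviation univ_states :: "('x \<times> 'q) measure" where
  "univ_states \<equiv> univ_meas_space states"

abbreviation P :: "('x \<times> 'q \<Rightarrow> ennreal) \<Rightarrow> 'x \<times> 'q \<Rightarrow> ennreal" where
  "P \<equiv> prod_step t h L \<tau> \<mu>"

lemma prob_space_t: "prob_space (t x u)" and sets_t: "sets (t x u) = sets borel"
  using measurable_space[OF kernel, of "(x, u)"] by (auto simp: space_pair_measure space_prob_algebra)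

lemma prob_space_\<mu>: "prob_space (\<mu> s)" and sets_\<mu>: "sets (\<mu> s) = sets borel"
  using measurable_space[OF policy, of s] by (auto simp: space_pair_measure space_prob_algebra)

lemma P_mono: "(\<And>s'. f s' \<le> g s') \<Longrightarrow> P f s \<le> P g s"
  unfolding prod_step_def by (intro nn_integral_mono) auto

lemma P_const: "P (\<lambda>_. c) s = c"
  unfolding prod_step_def
  by (simp add: prob_space.emeasure_space_1[OF prob_space_t] prob_space.emeasure_space_1[OF prob_space_\<mu>])

lemma P_le_1: "(\<And>s'. f s' \<le> 1) \<Longrightarrow> P f s \<le> 1"
  using P_mono[of f "\<lambda>_. 1" s] by (simp add: P_const)

definition Q :: "('x \<times> 'q \<Rightarrow> ennreal) \<Rightarrow> ('x \<times> 'q) \<times> 'u \<Rightarrow> ennreal" where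
  "Q f = (\<lambda>(s, u). \<integral>\<^sup>+x'. f (x', \<tau> (snd s) (L (h x'))) \<partial>t (fst s) u)"

lemma P_eq_Q: "P f s = (\<integral>\<^sup>+u. Q f (s, u) \<partial>\<mu> s)"
  unfolding prod_step_def Q_def by simp

declare h_meas [measurable] L_meas [measurable]

lemma measurable_successor: "(\<lambda>x'. (x', \<tau> q (L (h x')))) \<in> borel \<rightarrow>\<^sub>M states"
  by measurable

lemma measurable_Q:
  assumes f: "f \<in> borel_measurable univ_states"
  shows "Q f \<in> borel_measurable (univ_meas_space (states \<Otimes>\<^sub>M borel))"
proof -
  have "(\<lambda>v. (snd v, \<tau> (snd (fst (fst v))) (L (h (snd v)))))
      \<in> (states \<Otimes>\<^sub>M borel) \<Otimes>\<^sub>M borel \<rightarrow>\<^sub>M states"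
    by measurable
  note integrand = univ_measurable_comp[OF this f]
  have "(\<lambda>w. (fst (fst w), snd w)) \<in> states \<Otimes>\<^sub>M borel \<rightarrow>\<^sub>M borel \<Otimes>\<^sub>M borel"
    by measurable
  from measurable_compose[OF this kernel]
  have "(\<lambda>w. t (fst (fst w)) (snd w)) \<in> univ_meas_space (states \<Otimes>\<^sub>M borel) \<rightarrow>\<^sub>M prob_algebra borel"
    by (intro measurable_univ_meas_space) simp
  from nn_integral_univ_measurable_kernel[OF this integrand] show ?thesis
    unfolding Q_def by (simp add: case_prod_beta')
qed

lemma measurable_P:
  assumes "f \<in> borel_measurable univ_states"
  shows "P f \<in> borel_measurable univ_states"
  unfolding P_eq_Q[abs_def]
  using nn_integral_univ_measurable_kernel[OF policy measurable_Q[OF assms]] by simp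

lemma P_add:
  assumes f: "f \<in> borel_measurable univ_states" and g: "g \<in> borel_measurable univ_states"
  shows "P (\<lambda>s. f s + g s) s = P f s + P g s"
proof -
  have "Q (\<lambda>s. f s + g s) w = Q f w + Q g w" for w
    unfolding Q_def case_prod_beta'
    by (intro nn_integral_add_univ_measurable[OF prob_space_t sets_t]
        univ_measurable_comp[OF measurable_successor f] univ_measurable_comp[OF measurable_successor g])
  moreover have "(\<lambda>u. Q f (s, u)) \<in> borel_measurable (univ_meas_space borel)"
    if "f \<in> borel_measurable univ_states" for f
    using univ_measurable_comp[OF measurable_Pair1'[of s] measurable_Q[OF that]]
    by (simp add: space_pair_measure)
  ultimately show ?thesis
    unfolding P_eq_Q using f g by (simp add: nn_integral_add_univ_measurable[OF prob_space_\<mu> sets_\<mu>])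
qed

lemma P_cmult:
  assumes f: "f \<in> borel_measurable univ_states"
  shows "P (\<lambda>s. c * f s) s = c * P f s"
proof -
  have "Q (\<lambda>s. c * f s) w = c * Q f w" for w
    unfolding Q_def case_prod_beta'
    by (intro nn_integral_cmult_univ_measurable[OF prob_space_t sets_t]
        univ_measurable_comp[OF measurable_successor f])
  moreover have "(\<lambda>u. Q f (s, u)) \<in> borel_measurable (univ_meas_space borel)"
    using univ_measurable_comp[OF measurable_Pair1'[of s] measurable_Q[OF f]]
    by (simp add: space_pair_measure)
  ultimately show ?thesis
    unfolding P_eq_Q by (simp add: nn_integral_cmult_univ_measurable[OF prob_space_\<mu> sets_\<mu>])
qed

lemma P_sum:
  fixes n :: nat
  assumes "\<And>i. f i \<in> borel_measurable univ_states"
  shows "P (\<lambda>s. \<Sum>i<n. f i s) s = (\<Sum>i<n. P (f i) s)"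
proof (induction n)
  case 0
  show ?case
    by (simp add: P_const)
next
  case (Suc n)
  have "(\<lambda>s. \<Sum>i<n. f i s) \<in> borel_measurable univ_states"
    using assms by measurable
  then show ?case
    using P_add[OF _ assms[of n]] Suc by simp
qed

lemma avoid_le_1: "avoid t h L \<tau> \<mu> A n s \<le> 1"
proof (induction n arbitrary: s)
  case (Suc n)
  then show ?case
    using P_le_1[of "avoid t h L \<tau> \<mu> A n" s] by (simp add: indicator_def)
qed simp

lemma avoid_Suc_le: "avoid t h L \<tau> \<mu> A (Suc n) s \<le> avoid t h L \<tau> \<mu> A n s"
proof (induction n arbitrary: s)
  case 0
  show ?case
    by (simp add: P_le_1 avoid_le_1 indicator_def)
next
  case (Suc n)
  then show ?case
    by (simp add: P_mono mult_left_mono)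
qed

lemma avoid_antimono:
  assumes "A \<subseteq> B"
  shows "avoid t h L \<tau> \<mu> B n s \<le> avoid t h L \<tau> \<mu> A n s"
proof (induction n arbitrary: s)
  case (Suc n)
  have "indicator (- B) s \<le> (indicator (- A) s :: ennreal)"
    using assms by (auto simp: indicator_def)
  then show ?case
    using Suc by (simp add: P_mono mult_mono)
qed simp

lemma measurable_avoid:
  assumes "A \<in> sets univ_states"
  shows "avoid t h L \<tau> \<mu> A n \<in> borel_measurable univ_states"
proof (induction n)
  case (Suc n)
  have "- A \<in> sets univ_states"
    using sets.compl_sets[OF assms] by (simp add: Compl_eq_Diff_UNIV space_pair_measure)
  then show ?case
    using measurable_P[OF Suc] by simp
qed simp

lemma avoid_absorbing:
  assumes "I \<subseteq> - A" and "\<And>s. s \<in> I \<Longrightarrow> P (indicator I) s = 1" and "s \<in> I"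
  shows "avoid t h L \<tau> \<mu> A n s = 1"
  using \<open>s \<in> I\<close>
proof (induction n arbitrary: s)
  case (Suc n)
  have "indicator I s' \<le> avoid t h L \<tau> \<mu> A n s'" for s'
    using Suc.IH[of s'] by (cases "s' \<in> I") auto
  then have "1 \<le> P (avoid t h L \<tau> \<mu> A n) s"
    using P_mono assms(2)[OF Suc.prems] by metis
  then have "P (avoid t h L \<tau> \<mu> A n) s = 1"
    using P_le_1 avoid_le_1 by (metis antisym)
  then show ?case
    using assms(1) Suc.prems by auto
qed simp

lemma mean_hit_antimono:
  assumes "A \<subseteq> B"
  shows "mean_hit t h L \<tau> \<mu> B s \<le> mean_hit t h L \<tau> \<mu> A s"
  unfolding mean_hit_def using assms by (intro suminf_le summableI avoid_antimono)

definition mean_hit_trunc :: "('x \<times> 'q) set \<Rightarrow> nat \<Rightarrow> 'x \<times> 'q \<Rightarrow> ennreal" where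
  "mean_hit_trunc A l s = (\<Sum>k<l. avoid t h L \<tau> \<mu> A (Suc k) s)"

lemma mean_hit_trunc_le_mean_hit: "mean_hit_trunc A l s \<le> mean_hit t h L \<tau> \<mu> A s"
  unfolding mean_hit_trunc_def mean_hit_def by (intro sum_le_suminf summableI) auto

lemma measurable_mean_hit_trunc:
  "A \<in> sets univ_states \<Longrightarrow> mean_hit_trunc A l \<in> borel_measurable univ_states"
  unfolding mean_hit_trunc_def[abs_def] using measurable_avoid by measurable

lemma mean_hit_trunc_Suc:
  assumes A: "A \<in> sets univ_states" and s: "s \<notin> A"
  shows "mean_hit_trunc A (Suc l) s = 1 + P (mean_hit_trunc A l) s"
proof -
  have "mean_hit_trunc A (Suc l) s
      = avoid t h L \<tau> \<mu> A (Suc 0) s + (\<Sum>k<l. avoid t h L \<tau> \<mu> A (Suc (Suc k)) s)"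
    unfolding mean_hit_trunc_def by (rule sum.lessThan_Suc_shift)
  also have "\<dots> = 1 + (\<Sum>k<l. P (avoid t h L \<tau> \<mu> A (Suc k)) s)"
    using s by (simp add: P_const avoid.simps(1)[abs_def])
  also have "(\<Sum>k<l. P (avoid t h L \<tau> \<mu> A (Suc k)) s) = P (mean_hit_trunc A l) s"
    unfolding mean_hit_trunc_def by (rule P_sum[symmetric]) (rule measurable_avoid[OF A])
  finally show ?thesis .
qed

end

section \<open>Value iteration and hitting times\<close>

locale gmdp_product_reach = gmdp_product t h L \<tau> \<mu>
  for t :: "'x::polish_space \<Rightarrow> 'u::polish_space \<Rightarrow> 'x measure"
    and h :: "'x \<Rightarrow> 'y::metric_space"
    and L :: "'y \<Rightarrow> 'ap::finite set"
    and \<tau> :: "'q::finite \<Rightarrow> 'ap set \<Rightarrow> 'q"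
    and \<mu> :: "'x \<times> 'q \<Rightarrow> 'u measure" +
  fixes F :: "'q set" and \<delta> :: real
begin

definition V_iter :: "nat \<Rightarrow> 'x \<times> 'q \<Rightarrow> real" where
  "V_iter l = (T_delta t h L \<tau> F \<mu> \<delta> ^^ l) (\<lambda>_. 0)"

definition S_iter :: "nat \<Rightarrow> 'x \<times> 'q \<Rightarrow> ennreal" where
  "S_iter l s = ennreal (max (indicator F (snd s)) (V_iter l s))"

lemma V_iter_0 [simp]: "V_iter 0 s = 0"
  by (simp add: V_iter_def)

lemma V_iter_Suc: "V_iter (Suc l) s = clamp01 (T_op t h L \<tau> F \<mu> (V_iter l) s - \<delta>)"
  by (simp add: V_iter_def T_delta_def)

lemma V_iter_bounds: "0 \<le> V_iter l s" "V_iter l s \<le> 1"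
  by (cases l; simp add: V_iter_Suc clamp01_def)+

lemma S_iter_le_1: "S_iter l s \<le> 1"
  using V_iter_bounds[of l s] by (simp add: S_iter_def indicator_def)

lemma ennreal_T_op_V_iter: "ennreal (T_op t h L \<tau> F \<mu> (V_iter l) s) = P (S_iter l) s"
proof -
  have "P (S_iter l) s < top"
    using P_le_1[of "S_iter l" s] S_iter_le_1 by (simp add: le_less_trans)
  then show ?thesis
    unfolding T_op_def S_iter_def[abs_def] by simp
qed

lemma V_iter_Suc_mono: "V_iter l s \<le> V_iter (Suc l) s"
proof (induction l arbitrary: s)
  case 0
  show ?case
    using V_iter_bounds[of "Suc 0" s] by simp
next
  case (Suc l)
  have "P (S_iter l) s \<le> P (S_iter (Suc l)) s"
    unfolding S_iter_def using Suc.IH by (intro P_mono ennreal_leI max.mono order_refl)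
  then have "ennreal (T_op t h L \<tau> F \<mu> (V_iter l) s) \<le> ennreal (T_op t h L \<tau> F \<mu> (V_iter (Suc l)) s)"
    by (simp only: ennreal_T_op_V_iter)
  then have "T_op t h L \<tau> F \<mu> (V_iter l) s \<le> T_op t h L \<tau> F \<mu> (V_iter (Suc l)) s"
    by (simp add: T_op_def)
  then show ?case
    by (simp add: V_iter_Suc[of "Suc l"] V_iter_Suc[of l] clamp01_def)
qed

lemma V_iter_le_V_inf: "V_iter l s \<le> V_inf t h L \<tau> F \<mu> \<delta> s"
proof -
  have bdd: "bdd_above (range (\<lambda>l. V_iter l s))"
    using V_iter_bounds by (intro bdd_aboveI) blast
  have "(\<lambda>l. V_iter l s) \<longlonglongrightarrow> (SUP l. V_iter l s)"
    using V_iter_Suc_mono by (intro LIMSEQ_incseq_SUP bdd incseq_SucI)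
  then have "V_inf t h L \<tau> F \<mu> \<delta> s = (SUP l. V_iter l s)"
    unfolding V_inf_def V_iter_def by (rule limI)
  then show ?thesis
    using cSUP_upper[OF _ bdd] by simp
qed

lemma measurable_V_iter: "V_iter l \<in> borel_measurable univ_states"
  and measurable_S_iter: "S_iter l \<in> borel_measurable univ_states"
proof -
  have [measurable]: "(\<lambda>s. indicator F (snd s) :: real) \<in> borel_measurable univ_states"
    by (intro measurable_univ_meas_space) measurable
  have "V_iter l \<in> borel_measurable univ_states \<and> S_iter l \<in> borel_measurable univ_states"
  proof (induction l)
    case 0
    show ?case
      unfolding S_iter_def[abs_def] by simp
  next
    case (Suc l)
    have "V_iter (Suc l) = (\<lambda>s. clamp01 (enn2real (P (S_iter l) s) - \<delta>))"
      by (simp add: fun_eq_iff V_iter_Suc T_op_def S_iter_def[abs_def])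
    moreover have [measurable]: "P (S_iter l) \<in> borel_measurable univ_states"
      using Suc by (intro measurable_P) simp
    ultimately have [measurable]: "V_iter (Suc l) \<in> borel_measurable univ_states"
      by (simp add: clamp01_def)
    show ?case
      unfolding S_iter_def[abs_def] by simp
  qed
  then show "V_iter l \<in> borel_measurable univ_states" "S_iter l \<in> borel_measurable univ_states"
    by simp_all
qed

lemma P_S_iter_le:
  assumes "\<delta> \<ge> 0"
  shows "P (S_iter l) s \<le> ennreal (V_iter (Suc l) s) + ennreal \<delta>"
proof -
  have "T_op t h L \<tau> F \<mu> (V_iter l) s \<le> 1"
    using P_le_1[of "S_iter l" s] S_iter_le_1 by (simp flip: ennreal_T_op_V_iter)
  then have "T_op t h L \<tau> F \<mu> (V_iter l) s \<le> V_iter (Suc l) s + \<delta>"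
    using assms by (simp add: V_iter_Suc clamp01_def)
  then show ?thesis
    using assms V_iter_bounds[of "Suc l" s]
    by (simp flip: ennreal_T_op_V_iter ennreal_plus add: ennreal_leI)
qed

text \<open>
  The absorbing set \<open>I\<close> need not be measurable; \<open>trap\<close> is, and it contains every absorbing set.
\<close>

definition trap :: "('x \<times> 'q) set" where
  "trap = {s. \<forall>n. avoid t h L \<tau> \<mu> (UNIV \<times> F) n s = 1}"

lemma UNIV_times_F_in_sets: "UNIV \<times> F \<in> sets univ_states"
  by (rule subsetD[OF sets_subset_univ_meas_space pair_measureI]) simp_all

lemma trap_in_sets: "trap \<in> sets univ_states"
proof -
  have "trap = (\<Inter>n. avoid t h L \<tau> \<mu> (UNIV \<times> F) n -` {1} \<inter> space univ_states)"
    unfolding trap_def by (auto simp: space_pair_measure)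
  also have "\<dots> \<in> sets univ_states"
    using measurable_sets[OF measurable_avoid[OF UNIV_times_F_in_sets], of "{1}"]
    by (intro sets.countable_INT) auto
  finally show ?thesis .
qed

lemma absorbing_subset_trap:
  assumes "absorbing t h L \<tau> F \<mu> I"
  shows "I \<subseteq> trap"
proof -
  have "I \<subseteq> - (UNIV \<times> F)" "\<And>s. s \<in> I \<Longrightarrow> P (indicator I) s = 1"
    using assms unfolding absorbing_def by auto
  then show ?thesis
    unfolding trap_def by (auto intro: avoid_absorbing)
qed

lemma P_S_iter_mean_hit_trunc_avoid_le:
  assumes "\<delta> \<ge> 0" and A: "A \<in> sets univ_states" and "s \<notin> A" "snd s \<notin> F"
  shows "P (\<lambda>s'. S_iter l s' + ennreal \<delta> * mean_hit_trunc A l s'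
                  + avoid t h L \<tau> \<mu> (UNIV \<times> F) (Suc l) s') s
    \<le> S_iter (Suc l) s + ennreal \<delta> * mean_hit_trunc A (Suc l) s
        + avoid t h L \<tau> \<mu> (UNIV \<times> F) (Suc (Suc l)) s"
proof -
  define a where "a = avoid t h L \<tau> \<mu> (UNIV \<times> F)"
  have meas [measurable]: "S_iter l \<in> borel_measurable univ_states"
    "mean_hit_trunc A l \<in> borel_measurable univ_states" "a (Suc l) \<in> borel_measurable univ_states"
    using measurable_S_iter measurable_mean_hit_trunc[OF A] measurable_avoid[OF UNIV_times_F_in_sets]
    unfolding a_def by blast+
  have "P (\<lambda>s'. S_iter l s' + ennreal \<delta> * mean_hit_trunc A l s' + a (Suc l) s') s
      = P (\<lambda>s'. S_iter l s' + ennreal \<delta> * mean_hit_trunc A l s') s + P (a (Suc l)) s"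
    by (intro P_add) measurable
  also have "P (\<lambda>s'. S_iter l s' + ennreal \<delta> * mean_hit_trunc A l s') s
      = P (S_iter l) s + ennreal \<delta> * P (mean_hit_trunc A l) s"
    using meas by (simp add: P_add P_cmult)
  also have "P (S_iter l) s \<le> ennreal (V_iter (Suc l) s) + ennreal \<delta>"
    by (rule P_S_iter_le[OF assms(1)])
  also have "ennreal (V_iter (Suc l) s) + ennreal \<delta> + ennreal \<delta> * P (mean_hit_trunc A l) s
      = ennreal (V_iter (Suc l) s) + ennreal \<delta> * mean_hit_trunc A (Suc l) s"
    using assms(3) by (simp add: mean_hit_trunc_Suc[OF A] distrib_left add.assoc)
  also have "P (a (Suc l)) s = a (Suc (Suc l)) s"
    using assms(4) unfolding a_def by (cases s) (simp add: indicator_def)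
  also have "ennreal (V_iter (Suc l) s) \<le> S_iter (Suc l) s"
    unfolding S_iter_def by (intro ennreal_leI) simp
  finally show ?thesis
    unfolding a_def by (simp add: add_right_mono)
qed

lemma one_le_S_iter_mean_hit_trunc_avoid:
  assumes "\<delta> \<ge> 0"
  shows "1 \<le> S_iter l s + ennreal \<delta> * mean_hit_trunc (trap \<union> UNIV \<times> F) l s
              + avoid t h L \<tau> \<mu> (UNIV \<times> F) (Suc l) s"
proof (induction l arbitrary: s)
  case 0
  show ?case
    by (cases s) (simp add: S_iter_def mean_hit_trunc_def P_const avoid.simps(1)[abs_def] indicator_def)
next
  case (Suc l)
  consider "snd s \<in> F" | "s \<in> trap" | "s \<notin> trap \<union> UNIV \<times> F"
    by (cases s) auto
  then show ?case
  proof cases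
    case 1
    then have "S_iter (Suc l) s = 1"
      using V_iter_bounds[of "Suc l" s] by (simp add: S_iter_def)
    then show ?thesis
      by (simp add: add.assoc)
  next
    case 2
    then have "avoid t h L \<tau> \<mu> (UNIV \<times> F) (Suc (Suc l)) s = 1"
      unfolding trap_def by blast
    then show ?thesis
      by (simp del: avoid.simps)
  next
    case 3
    have "1 = P (\<lambda>_. 1) s"
      by (simp add: P_const)
    also have "\<dots> \<le> P (\<lambda>s'. S_iter l s' + ennreal \<delta> * mean_hit_trunc (trap \<union> UNIV \<times> F) l s'
                          + avoid t h L \<tau> \<mu> (UNIV \<times> F) (Suc l) s') s"
      using Suc.IH by (rule P_mono)
    also have "\<dots> \<le> S_iter (Suc l) s + ennreal \<delta> * mean_hit_trunc (trap \<union> UNIV \<times> F) (Suc l) s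
                  + avoid t h L \<tau> \<mu> (UNIV \<times> F) (Suc (Suc l)) s"
      using 3 trap_in_sets UNIV_times_F_in_sets
      by (intro P_S_iter_mean_hit_trunc_avoid_le[OF assms]) (auto simp: mem_Times_iff)
    finally show ?thesis .
  qed
qed

lemma reach_prob_le:
  assumes "\<delta> \<ge> 0" and "absorbing t h L \<tau> F \<mu> I"
  shows "reach_prob t h L \<tau> \<mu> (UNIV \<times> F) s
    \<le> ennreal (max (indicator F (snd s)) (V_inf t h L \<tau> F \<mu> \<delta> s))
      + ennreal \<delta> * mean_hit t h L \<tau> \<mu> (I \<union> UNIV \<times> F) s"
    (is "_ \<le> ?S")
proof -
  have "1 \<le> avoid t h L \<tau> \<mu> (UNIV \<times> F) l s + ?S" for l
  proof -
    have "S_iter l s \<le> ennreal (max (indicator F (snd s)) (V_inf t h L \<tau> F \<mu> \<delta> s))"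
      unfolding S_iter_def using V_iter_le_V_inf by (intro ennreal_leI max.mono) auto
    moreover have "mean_hit_trunc (trap \<union> UNIV \<times> F) l s \<le> mean_hit t h L \<tau> \<mu> (I \<union> UNIV \<times> F) s"
      using absorbing_subset_trap[OF assms(2)]
      by (intro order_trans[OF mean_hit_trunc_le_mean_hit mean_hit_antimono]) blast
    ultimately have "1 \<le> ?S + avoid t h L \<tau> \<mu> (UNIV \<times> F) l s"
      using one_le_S_iter_mean_hit_trunc_avoid[OF assms(1), of l s] avoid_Suc_le
      by (elim order_trans) (intro add_mono mult_left_mono order_refl zero_le)
    then show ?thesis
      by (simp only: add.commute)
  qed
  then have "1 \<le> (INF l. avoid t h L \<tau> \<mu> (UNIV \<times> F) l s) + ?S"
    unfolding INF_ennreal_add_const[symmetric] by (rule INF_greatest)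
  then show ?thesis
    unfolding reach_prob_def by (simp add: ennreal_minus_le_iff)
qed

end

theorem corollary3:
  fixes t :: "'x::polish_space \<Rightarrow> 'u::polish_space \<Rightarrow> 'x measure"
    and h :: "'x \<Rightarrow> 'y::metric_space"
    and x0 :: 'x
    and L :: "'y \<Rightarrow> 'ap::finite set"
    and q0 :: "'q::finite"
    and F :: "'q set"
    and \<tau> :: "'q \<Rightarrow> 'ap set \<Rightarrow> 'q"
    and \<mu> :: "'x \<times> 'q \<Rightarrow> 'u measure"
    and \<delta> :: real
    and I :: "('x \<times> 'q) set"
  assumes kernel: "(\<lambda>(x, u). t x u) \<in> measurable (borel \<Otimes>\<^sub>M borel) (prob_algebra borel)"
    and h_meas: "h \<in> borel_measurable borel"
    and L_meas: "L \<in> measurable borel (count_space UNIV)"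
    and policy: "\<mu> \<in> measurable (univ_meas_space (borel \<Otimes>\<^sub>M count_space UNIV))
                          (prob_algebra borel)"
    and delta: "\<delta> \<ge> 0"
    and absorb: "absorbing t h L \<tau> F \<mu> I"
  shows "(let qb0 = \<tau> q0 (L (h x0));
              S = max (indicator F qb0) (V_inf t h L \<tau> F \<mu> \<delta> (x0, qb0))
          in ennreal S + ennreal \<delta> * mean_hit t h L \<tau> \<mu> (I \<union> UNIV \<times> F) (x0, qb0)
               \<ge> reach_prob t h L \<tau> \<mu> (UNIV \<times> F) (x0, qb0))"
proof -
  interpret gmdp_product_reach t h L \<tau> \<mu> F \<delta>
    using kernel h_meas L_meas policy by unfold_locales
  show ?thesis
    unfolding Let_def using reach_prob_le[OF delta absorb, of "(x0, \<tau> q0 (L (h x0)))"] by simp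
qed

end
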